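(* Let $\mathcal{G}=(\mathcal{V},\mathcal{E},\mathbf{X})$ be an attributed graph with nodes $\mathcal{V}=\{v_1,\dots,v_n\}$ and node feature vectors $\mathbf{x}_{v}\in\mathbb{R}^d$ (row vectors), and suppose each node $v_i$ has a sensitive value $s_i\in\mathcal{A}=\{a_1,\dots,a_\zeta\}$. For $a\in\mathcal{A}$ let $\mathcal{V}_a=\{v_j: s_j=a\}$ and $\mathcal{V}_{\neq a}=\mathcal{V}\setminus\mathcal{V}_a$, both assumed nonempty. Let $\tilde{\mathbf{A}}\in\mathbb{R}^{n\times n}$ be the random walk probability matrix, where $\tilde{\mathbf{A}}[i,j]$ is the probability that a $K$-step random walk starting at $v_i$ terminates at $v_j$ (so each row of $\tilde{\mathbf{A}}$ is a probability distribution). Define $$\beta[a,a]=\frac{1}{|\mathcal{V}_a|}\sum_{v_i\in\mathcal{V}_a,\,v_j\in\mathcal{V}_a}\tilde{\mathbf{A}}[i,j],\qquad \beta[\neq a,a]=\frac{1}{|\mathcal{V}_{\neq a}|}\sum_{v_i\in\mathcal{V}_{\neq a},\,v_j\in\mathcal{V}_a}\tilde{\mathbf{A}}[i,j].$$ Let $\mu_a=\frac{1}{|\mathcal{V}_a|}\sum_{v\in\mathcal{V}_a}\mathbf{x}_v$, $\mu_{\neq a}=\frac{1}{|\mathcal{V}_{\neq a}|}\sum_{v\in\mathcal{V}_{\neq a}}\mathbf{x}_v$, $dev(\mathcal{V}_a)=\max_{v\in\mathcal{V}_a}\|\mathbf{x}_v-\mu_a\|_\infty$, $dev(\mathcal{V}_{\neq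 a})=\max_{v\in\mathcal{V}_{\neq a}}\|\mathbf{x}_v-\mu_{\neq a}\|_\infty$, and $\delta_a=\max\{dev(\mathcal{V}_a),dev(\mathcal{V}_{\neq a})\}$. Consider a $K$-layer simple GCN (SGCN) with parameter matrix $\mathbf{W}$, i.e. the model whose logit at node $v$ is $\mathbf{p}_v=\mathbf{h}_v\mathbf{W}$ with $\mathbf{h}_v=\sum_{u\in\mathcal{V}}\tilde{\mathbf{A}}[v,u]\,\mathbf{x}_u$, and let $$\hat{\mathcal{L}}_{\text{dp}}=\sum_{a\in\mathcal{A}}\left\|\frac{\sum_{v_i\in\mathcal{V}_a}\mathbf{p}_{v_i}}{|\mathcal{V}_a|}-\frac{\sum_{v_j\in\mathcal{V}_{\neq a}}\mathbf{p}_{v_j}}{|\mathcal{V}_{\neq a}|}\right\|_2 .$$ Then, for any such SGCN with parameters $\mathbf{W}$, $$\hat{\mathcal{L}}_{\text{dp}}\le\sum_{a\in\mathcal{A}}\|\mathbf{W}\|_2\left(|\beta[a,a]-\beta[\neq a,a]|\cdot\|\mu_a-\mu_{\neq a}\|_2+2\sqrt{d}\sum_{a'\in\mathcal{A}}\delta_{a'}\right),$$ where $\|\mathbf{W}\|_2$ is the spectral norm of $\mathbf{W}$.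
   Context: A simple GCN (SGCN) is a graph convolutional network without nonlinear activations between layers, so that its $K$-layer node representation is the $K$-step propagated feature $\mathbf{h}_v=\sum_{u}\tilde{\mathbf{A}}[v,u]\mathbf{x}_u$ and its prediction is $\sigma(\mathbf{h}_v\mathbf{W})$ with $\sigma$ the softmax; the vector $\mathbf{p}_v=\mathbf{h}_v\mathbf{W}$ (input to the softmax) is called the logit. $d$ is the dimension of the node feature vectors. *)

theory Defs
  imports "HOL-Analysis.Analysis"
begin

(* K-th power of a square matrix , giving the K-step transition matrix *)
primrec mat_pow :: "real^'n^'n \<Rightarrow> nat \<Rightarrow> real^'n^'n" where
  "mat_pow P 0 = mat 1"
| "mat_pow P (Suc k) = mat_pow P k ** P"

definition random_walk_transition :: "('n::finite \<Rightarrow> 'n \<Rightarrow> bool) \<Rightarrow> real^'n^'n \<Rightarrow> bool" where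
  "random_walk_transition E P \<longleftrightarrow>
     (\<forall>i j. 0 \<le> P$i$j) \<and> (\<forall>i. (\<Sum>j\<in>UNIV. P$i$j) = 1) \<and> (\<forall>i j. P$i$j \<noteq> 0 \<longrightarrow> E i j)"

definition linf_norm :: "real^'d \<Rightarrow> real" where
  "linf_norm y = Max (range (\<lambda>i. \<bar>y$i\<bar>))"

definition mean_feat :: "('n \<Rightarrow> real^'d) \<Rightarrow> 'n set \<Rightarrow> real^'d" where
  "mean_feat x S = (1 / real (card S)) *\<^sub>R (\<Sum>v\<in>S. x v)"

definition dev :: "('n \<Rightarrow> real^'d) \<Rightarrow> 'n set \<Rightarrow> real" where
  "dev x S = Max ((\<lambda>v. linf_norm (x v - mean_feat x S)) ` S)"

definition grp :: "('n \<Rightarrow> 'a) \<Rightarrow> 'a \<Rightarrow> 'n set" where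
  "grp s a = {v. s v = a}"

definition grp_not :: "('n \<Rightarrow> 'a) \<Rightarrow> 'a \<Rightarrow> 'n set" where
  "grp_not s a = {v. s v \<noteq> a}"

definition beta :: "real^'n^'n \<Rightarrow> 'n set \<Rightarrow> 'n set \<Rightarrow> real" where
  "beta At S T = (1 / real (card S)) * (\<Sum>i\<in>S. \<Sum>j\<in>T. At$i$j)"

definition delta :: "('n \<Rightarrow> real^'d) \<Rightarrow> ('n \<Rightarrow> 'a) \<Rightarrow> 'a \<Rightarrow> real" where
  "delta x s a = max (dev x (grp s a)) (dev x (grp_not s a))"

definition sgcn_hidden :: "real^'n^'n \<Rightarrow> ('n \<Rightarrow> real^'d) \<Rightarrow> 'n \<Rightarrow> real^'d" where
  "sgcn_hidden At x v = (\<Sum>u\<in>UNIV. (At$v$u) *\<^sub>R x u)"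

definition sgcn_logit :: "real^'n^'n \<Rightarrow> ('n \<Rightarrow> real^'d) \<Rightarrow> real^'c^'d \<Rightarrow> 'n \<Rightarrow> real^'c" where
  "sgcn_logit At x W v = sgcn_hidden At x v v* W"

definition spectral_norm :: "real^'c^'d \<Rightarrow> real" where
  "spectral_norm W = onorm (\<lambda>y. y v* W)"

definition L_dp :: "real^'n^'n \<Rightarrow> ('n \<Rightarrow> real^'d) \<Rightarrow> real^'c^'d \<Rightarrow> ('n \<Rightarrow> 'a) \<Rightarrow> 'a set \<Rightarrow> real" where
  "L_dp At x W s A = (\<Sum>a\<in>A.
      norm ((1 / real (card (grp s a))) *\<^sub>R (\<Sum>v\<in>grp s a. sgcn_logit At x W v)
          - (1 / real (card (grp_not s a))) *\<^sub>R (\<Sum>v\<in>grp_not s a. sgcn_logit At x W v)))"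

end

theory Submission
  imports Defs
begin

text \<open>Split each feature as \<open>x\<^sub>u = c\<^sub>u + e\<^sub>u\<close>, where \<open>c\<^sub>u\<close> is the mean of the group of \<open>u\<close>
  (\<open>\<mu>\<^sub>a\<close> on \<open>V\<^sub>a\<close>, \<open>\<mu>\<^sub>\<noteq>\<^sub>a\<close> on its complement), so that every coordinate of \<open>e\<^sub>u\<close> is
  bounded by \<open>\<delta>\<^sub>a\<close>. As the rows of the propagation matrix are probability distributions, the
  two-valued part propagates to \<open>\<mu>\<^sub>\<noteq>\<^sub>a + r\<^sub>i (\<mu>\<^sub>a - \<mu>\<^sub>\<noteq>\<^sub>a)\<close> at node \<open>i\<close>, where \<open>r\<^sub>i\<close> is the
  mass that \<open>i\<close> sends into \<open>V\<^sub>a\<close>; averaging \<open>r\<^sub>i\<close> over a group gives \<open>\<beta>\<close>, so the group means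
  of this part differ by exactly \<open>(\<beta>[a,a] - \<beta>[\<noteq>a,a]) (\<mu>\<^sub>a - \<mu>\<^sub>\<noteq>\<^sub>a)\<close>. Propagation and
  averaging are convex combinations, so the group means of the propagated deviations have
  coordinates within \<open>\<delta>\<^sub>a\<close>; their difference therefore has 2-norm at most \<open>2 \<surd>d \<delta>\<^sub>a\<close>.
  Finally \<open>W\<close> stretches norms by at most \<open>\<parallel>W\<parallel>\<^sub>2\<close>, and \<open>\<delta>\<^sub>a\<close> is bounded by the sum of all
  \<open>\<delta>\<^sub>a\<^sub>'\<close>.\<close>

definition row_stochastic :: "real^'n^'n \<Rightarrow> bool" where
  "row_stochastic M \<longleftrightarrow> (\<forall>i j. 0 \<le> M$i$j) \<and> (\<forall>i. (\<Sum>j\<in>UNIV. M$i$j) = 1)"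

lemma row_stochastic_mat_1: "row_stochastic (mat 1 :: real^'n::finite^'n)"
  by (simp add: row_stochastic_def mat_def)

lemma row_stochastic_mult:
  fixes M N :: "real^'n::finite^'n"
  assumes "row_stochastic M" "row_stochastic N"
  shows "row_stochastic (M ** N)"
proof -
  have "(\<Sum>j\<in>UNIV. (M ** N) $ i $ j) = 1" for i
  proof -
    have "(\<Sum>j\<in>UNIV. (M ** N) $ i $ j) = (\<Sum>j\<in>UNIV. \<Sum>k\<in>UNIV. M$i$k * N$k$j)"
      unfolding matrix_matrix_mult_def by simp
    also have "\<dots> = (\<Sum>k\<in>UNIV. M$i$k * (\<Sum>j\<in>UNIV. N$k$j))"
      by (subst sum.swap) (simp add: sum_distrib_left)
    also have "\<dots> = 1"
      using assms by (simp add: row_stochastic_def)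
    finally show ?thesis .
  qed
  moreover have "0 \<le> (M ** N) $ i $ j" for i j
    using assms unfolding row_stochastic_def matrix_matrix_mult_def by (auto intro!: sum_nonneg)
  ultimately show ?thesis
    by (simp add: row_stochastic_def)
qed

lemma row_stochastic_mat_pow: "row_stochastic P \<Longrightarrow> row_stochastic (mat_pow P K)"
  by (induction K) (simp_all add: row_stochastic_mat_1 row_stochastic_mult)

lemma random_walk_transition_row_stochastic:
  "random_walk_transition E P \<Longrightarrow> row_stochastic P"
  by (simp add: random_walk_transition_def row_stochastic_def)

lemma abs_component_le_linf_norm: "\<bar>y$k\<bar> \<le> linf_norm y"
  unfolding linf_norm_def by (rule Max_ge) auto

lemma norm_le_sqrt_card_mult:
  fixes y :: "real^'d"
  assumes "\<And>k. \<bar>y$k\<bar> \<le> m"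
  shows "norm y \<le> sqrt (real CARD('d)) * m"
proof -
  have "0 \<le> m"
    using assms[of undefined] by linarith
  have "(\<Sum>k\<in>UNIV. (y$k)\<^sup>2) \<le> (\<Sum>k\<in>(UNIV::'d set). m\<^sup>2)"
    using assms by (intro sum_mono) (metis abs_ge_zero power2_abs power_mono)
  then have "norm y \<le> sqrt (real CARD('d) * m\<^sup>2)"
    by (simp add: norm_vec_def L2_set_def)
  with \<open>0 \<le> m\<close> show ?thesis
    by (simp add: real_sqrt_mult)
qed

lemma mean_feat_add: "mean_feat (\<lambda>v. f v + g v) G = mean_feat f G + mean_feat g G"
  by (simp add: mean_feat_def sum.distrib scaleR_add_right)

lemma mean_feat_const: "finite G \<Longrightarrow> G \<noteq> {} \<Longrightarrow> mean_feat (\<lambda>_. c) G = c"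
  by (simp add: mean_feat_def sum_constant_scaleR del: sum_constant)

lemma mean_feat_scaleR_const: "mean_feat (\<lambda>v. r v *\<^sub>R c) G = (sum r G / real (card G)) *\<^sub>R c"
  by (simp add: mean_feat_def scaleR_sum_left[symmetric])

lemma abs_mean_feat_component_le:
  assumes "finite G" "G \<noteq> {}" "\<And>v. v \<in> G \<Longrightarrow> \<bar>f v $ k\<bar> \<le> m"
  shows "\<bar>mean_feat f G $ k\<bar> \<le> m"
proof -
  have "\<bar>\<Sum>v\<in>G. f v $ k\<bar> \<le> real (card G) * m"
    using order_trans[OF sum_abs sum_mono[of G "\<lambda>v. \<bar>f v $ k\<bar>" "\<lambda>_. m"]] assms(3) by simp
  moreover have "real (card G) > 0"
    using assms by (simp add: card_gt_0_iff)
  ultimately show ?thesis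
    by (simp add: mean_feat_def sum_component abs_divide divide_le_eq mult.commute)
qed

lemma abs_component_diff_mean_le_dev:
  assumes "finite S" "v \<in> S"
  shows "\<bar>(x v - mean_feat x S) $ k\<bar> \<le> dev x S"
proof -
  have "linf_norm (x v - mean_feat x S) \<le> dev x S"
    unfolding dev_def using assms by (intro Max_ge) auto
  then show ?thesis
    using abs_component_le_linf_norm order_trans by blast
qed

lemma dev_nonneg: "finite S \<Longrightarrow> S \<noteq> {} \<Longrightarrow> 0 \<le> dev x S"
  using abs_component_diff_mean_le_dev[of S _ x undefined] by (meson abs_ge_zero ex_in_conv order_trans)

lemma sgcn_hidden_add: "sgcn_hidden M (\<lambda>u. f u + g u) i = sgcn_hidden M f i + sgcn_hidden M g i"
  by (simp add: sgcn_hidden_def scaleR_add_right sum.distrib)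

lemma sgcn_hidden_two_valued:
  assumes "row_stochastic M"
  shows "sgcn_hidden M (\<lambda>u. if u \<in> S then p else q) i = q + (\<Sum>u\<in>S. M$i$u) *\<^sub>R (p - q)"
proof -
  have "(\<lambda>u. if u \<in> S then p else q) = (\<lambda>u. q + (if u \<in> S then p - q else 0))"
    by auto
  then have "sgcn_hidden M (\<lambda>u. if u \<in> S then p else q) i
      = sgcn_hidden M (\<lambda>_. q) i + sgcn_hidden M (\<lambda>u. if u \<in> S then p - q else 0) i"
    by (simp only: sgcn_hidden_add)
  also have "sgcn_hidden M (\<lambda>_. q) i = q"
    using assms by (simp add: sgcn_hidden_def row_stochastic_def scaleR_sum_left[symmetric])
  also have "sgcn_hidden M (\<lambda>u. if u \<in> S then p - q else 0) i = (\<Sum>u\<in>S. M$i$u) *\<^sub>R (p - q)"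
    by (simp add: sgcn_hidden_def if_distrib sum.If_cases scaleR_sum_left)
  finally show ?thesis .
qed

lemma abs_sgcn_hidden_component_le:
  assumes "row_stochastic M" "\<And>u. \<bar>f u $ k\<bar> \<le> m"
  shows "\<bar>sgcn_hidden M f i $ k\<bar> \<le> m"
proof -
  have "\<bar>sgcn_hidden M f i $ k\<bar> \<le> (\<Sum>u\<in>UNIV. \<bar>M$i$u * f u $ k\<bar>)"
    unfolding sgcn_hidden_def by (simp add: sum_component sum_abs)
  also have "\<dots> \<le> (\<Sum>u\<in>UNIV. M$i$u * m)"
    using assms by (intro sum_mono) (simp add: row_stochastic_def abs_mult mult_left_mono)
  also have "\<dots> = m"
    using assms(1) by (simp add: row_stochastic_def sum_distrib_right[symmetric])
  finally show ?thesis .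
qed

lemma mean_feat_sgcn_hidden_decomp:
  fixes M :: "real^'n::finite^'n" and x :: "'n \<Rightarrow> real^'d"
  assumes "row_stochastic M" "G \<noteq> {}"
  shows "mean_feat (sgcn_hidden M x) G
    = q + beta M G S *\<^sub>R (p - q) + mean_feat (sgcn_hidden M (\<lambda>u. x u - (if u \<in> S then p else q))) G"
proof -
  define e where "e = (\<lambda>u. x u - (if u \<in> S then p else q))"
  have "x = (\<lambda>u. (if u \<in> S then p else q) + e u)"
    by (simp add: e_def)
  then have "sgcn_hidden M x i = q + (\<Sum>u\<in>S. M$i$u) *\<^sub>R (p - q) + sgcn_hidden M e i" for i
    using sgcn_hidden_add[of M "\<lambda>u. if u \<in> S then p else q" e i]
      sgcn_hidden_two_valued[OF assms(1), of S p q i] by simp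
  then have "sgcn_hidden M x = (\<lambda>i. q + (\<Sum>u\<in>S. M$i$u) *\<^sub>R (p - q) + sgcn_hidden M e i)"
    by (rule ext)
  then have "mean_feat (sgcn_hidden M x) G = mean_feat (\<lambda>_. q) G
      + mean_feat (\<lambda>i. (\<Sum>u\<in>S. M$i$u) *\<^sub>R (p - q)) G + mean_feat (sgcn_hidden M e) G"
    by (simp only: mean_feat_add)
  then show ?thesis
    unfolding e_def[symmetric] using assms(2) by (simp add: mean_feat_const mean_feat_scaleR_const beta_def)
qed

lemma norm_mean_sgcn_hidden_diff_le:
  fixes M :: "real^'n::finite^'n" and x :: "'n \<Rightarrow> real^'d"
  assumes M: "row_stochastic M" and "S \<noteq> {}" "- S \<noteq> {}"
  shows "norm (mean_feat (sgcn_hidden M x) S - mean_feat (sgcn_hidden M x) (- S))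
    \<le> \<bar>beta M S S - beta M (- S) S\<bar> * norm (mean_feat x S - mean_feat x (- S))
       + 2 * sqrt (real CARD('d)) * max (dev x S) (dev x (- S))"
proof -
  define \<mu> where "\<mu> = mean_feat x S"
  define \<mu>' where "\<mu>' = mean_feat x (- S)"
  define \<delta> where "\<delta> = max (dev x S) (dev x (- S))"
  define e where "e = (\<lambda>u. x u - (if u \<in> S then \<mu> else \<mu>'))"
  have "\<bar>e u $ k\<bar> \<le> \<delta>" for u k
    using abs_component_diff_mean_le_dev[of S u x k] abs_component_diff_mean_le_dev[of "- S" u x k]
    by (cases "u \<in> S") (auto simp: e_def \<mu>_def \<mu>'_def \<delta>_def)
  then have deviation: "\<bar>mean_feat (sgcn_hidden M e) G $ k\<bar> \<le> \<delta>" if "G \<noteq> {}" for G k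
    using that M by (intro abs_mean_feat_component_le abs_sgcn_hidden_component_le) auto
  have gap: "mean_feat (sgcn_hidden M x) S - mean_feat (sgcn_hidden M x) (- S)
      = (beta M S S - beta M (- S) S) *\<^sub>R (\<mu> - \<mu>')
        + (mean_feat (sgcn_hidden M e) S - mean_feat (sgcn_hidden M e) (- S))"
    unfolding e_def
      mean_feat_sgcn_hidden_decomp[OF M \<open>S \<noteq> {}\<close>, where x = x and S = S and p = \<mu> and q = \<mu>']
      mean_feat_sgcn_hidden_decomp[OF M \<open>- S \<noteq> {}\<close>, where x = x and S = S and p = \<mu> and q = \<mu>']
    by (simp add: algebra_simps)
  have "norm (mean_feat (sgcn_hidden M x) S - mean_feat (sgcn_hidden M x) (- S))
      \<le> \<bar>beta M S S - beta M (- S) S\<bar> * norm (\<mu> - \<mu>')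
        + norm (mean_feat (sgcn_hidden M e) S - mean_feat (sgcn_hidden M e) (- S))"
    unfolding gap by (metis norm_scaleR norm_triangle_ineq)
  also have "norm (mean_feat (sgcn_hidden M e) S - mean_feat (sgcn_hidden M e) (- S))
      \<le> sqrt (real CARD('d)) * (2 * \<delta>)"
    using deviation[OF \<open>S \<noteq> {}\<close>] deviation[OF \<open>- S \<noteq> {}\<close>]
    by (intro norm_le_sqrt_card_mult) (smt (verit) vector_minus_component)
  finally show ?thesis
    by (simp add: \<mu>_def \<mu>'_def \<delta>_def mult_ac)
qed

lemma bounded_linear_vector_matrix_mult: "bounded_linear (\<lambda>y. y v* (W :: real^'c^'d))"
proof -
  have "(\<lambda>y. y v* W) = (*v) (transpose W)"
    by (simp add: fun_eq_iff)
  then show ?thesis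
    by (simp only:) (rule matrix_vector_mul_bounded_linear)
qed

lemma norm_vector_matrix_mult_le: "norm (y v* W) \<le> spectral_norm W * norm y"
  unfolding spectral_norm_def by (rule onorm[OF bounded_linear_vector_matrix_mult])

lemma spectral_norm_nonneg: "0 \<le> spectral_norm W"
  unfolding spectral_norm_def by (rule onorm_pos_le[OF bounded_linear_vector_matrix_mult])

lemma mean_feat_vector_matrix_mult: "mean_feat (\<lambda>v. f v v* W) G = mean_feat f G v* W"
proof -
  interpret bounded_linear "\<lambda>y. y v* W"
    by (rule bounded_linear_vector_matrix_mult)
  show ?thesis
    by (simp add: mean_feat_def scaleR sum)
qed

lemma L_dp_eq:
  "L_dp At x W s A = (\<Sum>a\<in>A.
      norm ((mean_feat (sgcn_hidden At x) (grp s a) - mean_feat (sgcn_hidden At x) (grp_not s a)) v* W))"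
proof -
  interpret bounded_linear "\<lambda>y. y v* W"
    by (rule bounded_linear_vector_matrix_mult)
  show ?thesis
    unfolding L_dp_def mean_feat_def[symmetric] sgcn_logit_def mean_feat_vector_matrix_mult diff ..
qed

lemma grp_not_eq_Compl: "grp_not s a = - grp s a"
  by (auto simp: grp_def grp_not_def)

lemma delta_nonneg: "grp s a \<noteq> {} \<Longrightarrow> 0 \<le> delta (x :: 'n::finite \<Rightarrow> real^'d) s a"
  unfolding delta_def using dev_nonneg[of "grp s a" x] by simp

theorem theorem1:
  fixes E :: "'n::finite \<Rightarrow> 'n \<Rightarrow> bool"
    and P :: "real^'n^'n"
    and K :: nat
    and x :: "'n \<Rightarrow> real^'d"
    and s :: "'n \<Rightarrow> 'a"
    and A :: "'a set"
    and W :: "real^'c^'d"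
  assumes P: "random_walk_transition E P"
    and finA: "finite A"
    and sA: "\<And>v. s v \<in> A"
    and ne: "\<And>a. a \<in> A \<Longrightarrow> grp s a \<noteq> {}"
    and ne': "\<And>a. a \<in> A \<Longrightarrow> grp_not s a \<noteq> {}"
  shows "L_dp (mat_pow P K) x W s A
    \<le> (\<Sum>a\<in>A. spectral_norm W *
          (\<bar>beta (mat_pow P K) (grp s a) (grp s a) - beta (mat_pow P K) (grp_not s a) (grp s a)\<bar>
             * norm (mean_feat x (grp s a) - mean_feat x (grp_not s a))
           + 2 * sqrt (real CARD('d)) * (\<Sum>a'\<in>A. delta x s a')))"
proof -
  \<comment> \<open>The estimate holds for each \<open>a\<close> separately.\<close>
  define M where "M = mat_pow P K"
  define gap where "gap a = mean_feat (sgcn_hidden M x) (grp s a) - mean_feat (sgcn_hidden M x) (grp_not s a)"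
    for a
  define bound where "bound a = \<bar>beta M (grp s a) (grp s a) - beta M (grp_not s a) (grp s a)\<bar>
      * norm (mean_feat x (grp s a) - mean_feat x (grp_not s a))
    + 2 * sqrt (real CARD('d)) * (\<Sum>a'\<in>A. delta x s a')" for a
  have M: "row_stochastic M"
    unfolding M_def using P by (intro row_stochastic_mat_pow random_walk_transition_row_stochastic)
  have "norm (gap a) \<le> bound a" if "a \<in> A" for a
  proof -
    have "delta x s a \<le> (\<Sum>a'\<in>A. delta x s a')"
      using that finA by (intro member_le_sum delta_nonneg ne) auto
    then have "2 * sqrt (real CARD('d)) * delta x s a \<le> 2 * sqrt (real CARD('d)) * (\<Sum>a'\<in>A. delta x s a')"
      by (intro mult_left_mono) auto
    then show ?thesis
      using norm_mean_sgcn_hidden_diff_le[OF M ne[OF that] ne'[OF that, unfolded grp_not_eq_Compl], of x]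
      unfolding gap_def bound_def delta_def grp_not_eq_Compl by linarith
  qed
  then have "norm (gap a v* W) \<le> spectral_norm W * bound a" if "a \<in> A" for a
    using that by (meson norm_vector_matrix_mult_le spectral_norm_nonneg mult_left_mono order_trans)
  then show ?thesis
    unfolding L_dp_eq M_def[symmetric] gap_def[symmetric] bound_def[symmetric] by (rule sum_mono)
qed

end
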